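(* Let $(H,G,\alpha,f)$ be a normalized crossed system such that $f$ is symmetric, i.e. $f(g_1,g_2)=f(g_2,g_1)$ for all $g_1,g_2\in G$. Then $$Z(H\#_\alpha^f G)=\{(h,g)\in H^G\times Z(G)\ :\ g\triangleright h'=h^{-1}h'h\ \text{for all } h'\in H\},$$ where $H^G=\{h\in H: g\triangleright h=h \text{ for all } g\in G\}$.
   Context: For groups $H,G$ and a map $\alpha:G\to\mathrm{Aut}(H)$ write $g\triangleright h:=\alpha(g)(h)$. A normalized crossed system is a quadruple $(H,G,\alpha,f)$ with maps $\alpha:G\to\mathrm{Aut}(H)$, $f:G\times G\to H$, $f(1,1)=1$, such that for all $g_1,g_2,g_3\in G$, $h\in H$: (WA) $g_1\triangleright(g_2\triangleright h)=f(g_1,g_2)\big((g_1g_2)\triangleright h\big)f(g_1,g_2)^{-1}$ and (CC) $f(g_1,g_2)f(g_1g_2,g_3)=\big(g_1\triangleright f(g_2,g_3)\big)f(g_1,g_2g_3)$. The crossed product $H\#_\alpha^f G$ is the group on the set $H\times G$ with multiplication $(h_1,g_1)\cdot(h_2,g_2)=\big(h_1(g_1\triangleright h_2)f(g_1,g_2),g_1g_2\big)$. *)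

theory Defs
  imports "HOL-Algebra.Algebra"
begin

definition grp_center :: "('a, 'b) monoid_scheme \<Rightarrow> 'a set" where
  "grp_center G = {z \<in> carrier G. \<forall>x \<in> carrier G. z \<otimes>\<^bsub>G\<^esub> x = x \<otimes>\<^bsub>G\<^esub> z}"

text \<open>Normalized crossed system (H, G, alpha, f); alpha g h stands for g |> h.\<close>
definition crossed_system ::
  "('h, 'c) monoid_scheme \<Rightarrow> ('g, 'd) monoid_scheme \<Rightarrow> ('g \<Rightarrow> 'h \<Rightarrow> 'h) \<Rightarrow> ('g \<Rightarrow> 'g \<Rightarrow> 'h) \<Rightarrow> bool"
where
  "crossed_system H G \<alpha> f \<longleftrightarrow>
     group H \<and> group G \<and>
     (\<forall>g \<in> carrier G. \<alpha> g \<in> iso H H) \<and>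
     (\<forall>g1 \<in> carrier G. \<forall>g2 \<in> carrier G. f g1 g2 \<in> carrier H) \<and>
     f \<one>\<^bsub>G\<^esub> \<one>\<^bsub>G\<^esub> = \<one>\<^bsub>H\<^esub> \<and>
     (\<forall>g1 \<in> carrier G. \<forall>g2 \<in> carrier G. \<forall>h \<in> carrier H.
        \<alpha> g1 (\<alpha> g2 h) = f g1 g2 \<otimes>\<^bsub>H\<^esub> \<alpha> (g1 \<otimes>\<^bsub>G\<^esub> g2) h \<otimes>\<^bsub>H\<^esub> inv\<^bsub>H\<^esub> (f g1 g2)) \<and>
     (\<forall>g1 \<in> carrier G. \<forall>g2 \<in> carrier G. \<forall>g3 \<in> carrier G.
        f g1 g2 \<otimes>\<^bsub>H\<^esub> f (g1 \<otimes>\<^bsub>G\<^esub> g2) g3 = \<alpha> g1 (f g2 g3) \<otimes>\<^bsub>H\<^esub> f g1 (g2 \<otimes>\<^bsub>G\<^esub> g3))"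

definition crossed_product ::
  "('h, 'c) monoid_scheme \<Rightarrow> ('g, 'd) monoid_scheme \<Rightarrow> ('g \<Rightarrow> 'h \<Rightarrow> 'h) \<Rightarrow> ('g \<Rightarrow> 'g \<Rightarrow> 'h) \<Rightarrow> ('h \<times> 'g) monoid"
where
  "crossed_product H G \<alpha> f =
     \<lparr> carrier = carrier H \<times> carrier G,
       monoid.mult = (\<lambda>(h1, g1) (h2, g2).
                 (h1 \<otimes>\<^bsub>H\<^esub> \<alpha> g1 h2 \<otimes>\<^bsub>H\<^esub> f g1 g2, g1 \<otimes>\<^bsub>G\<^esub> g2)),
       monoid.one = (inv\<^bsub>H\<^esub> (f \<one>\<^bsub>G\<^esub> \<one>\<^bsub>G\<^esub>), \<one>\<^bsub>G\<^esub>) \<rparr>"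

definition fixed_pts ::
  "('h, 'c) monoid_scheme \<Rightarrow> ('g, 'd) monoid_scheme \<Rightarrow> ('g \<Rightarrow> 'h \<Rightarrow> 'h) \<Rightarrow> 'h set"
where
  "fixed_pts H G \<alpha> = {h \<in> carrier H. \<forall>g \<in> carrier G. \<alpha> g h = h}"

end

theory Submission
  imports Defs
begin

(* Two elements (h,g) and (h',g') of H #_alpha^f G multiply to
   (h (g|>h') f(g,g'), g g') and (h' (g'|>h) f(g',g), g' g).  When f is
   symmetric the cocycle factors agree and cancel, so (h,g) is central iff
     (i)  h (g|>h') = h' (g'|>h)  for all h' in H, g' in G, and
     (ii) g is central in G.
   Taking h' = 1 in (i) (every g'|> is a homomorphism, so g|>1 = 1) gives
   g'|>h = h, i.e. h is a fixed point; with that, (i) reads h (g|>h') = h' h,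
   which is g|>h' = h^-1 h' h. *)

lemma crossed_system_groups:
  assumes "crossed_system H G \<alpha> f"
  shows "group H" and "group G"
  using assms unfolding crossed_system_def by blast+

lemma crossed_system_action_hom:
  assumes "crossed_system H G \<alpha> f" and "g \<in> carrier G"
  shows "\<alpha> g \<in> hom H H"
  using assms unfolding crossed_system_def iso_def by blast

lemma crossed_system_action_closed:
  assumes "crossed_system H G \<alpha> f" and "g \<in> carrier G" and "x \<in> carrier H"
  shows "\<alpha> g x \<in> carrier H"
  using crossed_system_action_hom[OF assms(1,2)] assms(3) by (rule hom_in_carrier)

lemma crossed_system_action_one:
  assumes "crossed_system H G \<alpha> f" and "g \<in> carrier G"
  shows "\<alpha> g \<one>\<^bsub>H\<^esub> = \<one>\<^bsub>H\<^esub>"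
proof -
  interpret group_hom H H "\<alpha> g"
    using crossed_system_groups(1)[OF assms(1)] crossed_system_action_hom[OF assms]
    by (simp add: group_hom_def group_hom_axioms_def)
  show ?thesis by (rule hom_one)
qed

lemma crossed_system_cocycle_closed:
  assumes "crossed_system H G \<alpha> f" and "g1 \<in> carrier G" and "g2 \<in> carrier G"
  shows "f g1 g2 \<in> carrier H"
  using assms unfolding crossed_system_def by blast

lemma (in group) mult_eq_conj_iff:
  assumes "h \<in> carrier G" and "x \<in> carrier G" and "y \<in> carrier G"
  shows "h \<otimes> x = y \<otimes> h \<longleftrightarrow> x = inv h \<otimes> y \<otimes> h"
proof
  assume "h \<otimes> x = y \<otimes> h"
  then have "inv h \<otimes> (h \<otimes> x) = inv h \<otimes> (y \<otimes> h)" by simp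
  then show "x = inv h \<otimes> y \<otimes> h"
    using assms by (simp add: m_assoc[symmetric])
next
  assume "x = inv h \<otimes> y \<otimes> h"
  then show "h \<otimes> x = y \<otimes> h"
    using assms by (simp add: m_assoc[symmetric])
qed

text \<open>If the cocycle is symmetric on the pair (g, g'), the cocycle factors of the two
  products coincide and cancel, leaving a condition on H and one on G.\<close>
lemma crossed_product_commute_iff:
  assumes cs: "crossed_system H G \<alpha> f" and sym: "f g g' = f g' g"
    and h: "h \<in> carrier H" and h': "h' \<in> carrier H"
    and g: "g \<in> carrier G" and g': "g' \<in> carrier G"
  shows "(h, g) \<otimes>\<^bsub>crossed_product H G \<alpha> f\<^esub> (h', g') =
           (h', g') \<otimes>\<^bsub>crossed_product H G \<alpha> f\<^esub> (h, g)
         \<longleftrightarrow> h \<otimes>\<^bsub>H\<^esub> \<alpha> g h' = h' \<otimes>\<^bsub>H\<^esub> \<alpha> g' h \<and> g \<otimes>\<^bsub>G\<^esub> g' = g' \<otimes>\<^bsub>G\<^esub> g"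
proof -
  interpret H: group H by (rule crossed_system_groups(1)[OF cs])
  have "f g' g \<in> carrier H" by (rule crossed_system_cocycle_closed[OF cs g' g])
  moreover have "\<alpha> g h' \<in> carrier H" "\<alpha> g' h \<in> carrier H"
    using crossed_system_action_closed[OF cs] g g' h h' by auto
  ultimately show ?thesis
    using h h' sym by (simp add: crossed_product_def H.r_cancel)
qed

lemma crossed_product_center_iff:
  assumes cs: "crossed_system H G \<alpha> f"
    and sym: "\<forall>g1 \<in> carrier G. \<forall>g2 \<in> carrier G. f g1 g2 = f g2 g1"
  shows "(h, g) \<in> grp_center (crossed_product H G \<alpha> f) \<longleftrightarrow>
           h \<in> carrier H \<and> g \<in> grp_center G \<and>
           (\<forall>h' \<in> carrier H. \<forall>g' \<in> carrier G. h \<otimes>\<^bsub>H\<^esub> \<alpha> g h' = h' \<otimes>\<^bsub>H\<^esub> \<alpha> g' h)"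
proof -
  interpret H: group H by (rule crossed_system_groups(1)[OF cs])
  have carrier_cp: "carrier (crossed_product H G \<alpha> f) = carrier H \<times> carrier G"
    by (simp add: crossed_product_def)
  have "(h, g) \<in> grp_center (crossed_product H G \<alpha> f) \<longleftrightarrow>
          h \<in> carrier H \<and> g \<in> carrier G \<and>
          (\<forall>h' \<in> carrier H. \<forall>g' \<in> carrier G.
             (h, g) \<otimes>\<^bsub>crossed_product H G \<alpha> f\<^esub> (h', g') =
             (h', g') \<otimes>\<^bsub>crossed_product H G \<alpha> f\<^esub> (h, g))"
    unfolding grp_center_def carrier_cp by auto
  also have "\<dots> \<longleftrightarrow> h \<in> carrier H \<and> g \<in> carrier G \<and>
          (\<forall>h' \<in> carrier H. \<forall>g' \<in> carrier G.
             h \<otimes>\<^bsub>H\<^esub> \<alpha> g h' = h' \<otimes>\<^bsub>H\<^esub> \<alpha> g' h \<and> g \<otimes>\<^bsub>G\<^esub> g' = g' \<otimes>\<^bsub>G\<^esub> g)"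
    using crossed_product_commute_iff[OF cs] sym by (metis (no_types, lifting))
  also have "\<dots> \<longleftrightarrow> h \<in> carrier H \<and> g \<in> grp_center G \<and>
          (\<forall>h' \<in> carrier H. \<forall>g' \<in> carrier G. h \<otimes>\<^bsub>H\<^esub> \<alpha> g h' = h' \<otimes>\<^bsub>H\<^esub> \<alpha> g' h)"
    unfolding grp_center_def using H.one_closed by blast
  finally show ?thesis .
qed

text \<open>With h' = 1 the condition forces h to be a fixed point of the action; once h is
  fixed, the condition says exactly that g acts on H as conjugation by h.\<close>
lemma twisted_commutation_iff:
  assumes cs: "crossed_system H G \<alpha> f" and h: "h \<in> carrier H" and g: "g \<in> carrier G"
  shows "(\<forall>h' \<in> carrier H. \<forall>g' \<in> carrier G. h \<otimes>\<^bsub>H\<^esub> \<alpha> g h' = h' \<otimes>\<^bsub>H\<^esub> \<alpha> g' h) \<longleftrightarrow>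
           h \<in> fixed_pts H G \<alpha> \<and>
           (\<forall>h' \<in> carrier H. \<alpha> g h' = inv\<^bsub>H\<^esub> h \<otimes>\<^bsub>H\<^esub> h' \<otimes>\<^bsub>H\<^esub> h)"
    (is "?commute \<longleftrightarrow> ?fixed \<and> ?conj")
proof
  interpret H: group H by (rule crossed_system_groups(1)[OF cs])
  have conj_iff: "h \<otimes>\<^bsub>H\<^esub> \<alpha> g h' = h' \<otimes>\<^bsub>H\<^esub> h \<longleftrightarrow> \<alpha> g h' = inv\<^bsub>H\<^esub> h \<otimes>\<^bsub>H\<^esub> h' \<otimes>\<^bsub>H\<^esub> h"
    if "h' \<in> carrier H" for h'
    using H.mult_eq_conj_iff crossed_system_action_closed[OF cs g that] h that by blast
  {
    assume commute: ?commute
    have fixed: "\<alpha> g' h = h" if "g' \<in> carrier G" for g'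
      using commute[rule_format, OF H.one_closed that] h g that
        crossed_system_action_one[OF cs g] crossed_system_action_closed[OF cs] by simp
    then show "?fixed \<and> ?conj"
      using commute conj_iff h g unfolding fixed_pts_def by auto
  }
  {
    assume "?fixed \<and> ?conj"
    then show ?commute
      using conj_iff unfolding fixed_pts_def by auto
  }
qed

theorem corollary1p11:
  assumes "crossed_system H G \<alpha> f"
    and "\<forall>g1 \<in> carrier G. \<forall>g2 \<in> carrier G. f g1 g2 = f g2 g1"
  shows "grp_center (crossed_product H G \<alpha> f) =
           {(h, g). h \<in> fixed_pts H G \<alpha> \<and> g \<in> grp_center G \<and>
              (\<forall>h' \<in> carrier H. \<alpha> g h' = inv\<^bsub>H\<^esub> h \<otimes>\<^bsub>H\<^esub> h' \<otimes>\<^bsub>H\<^esub> h)}"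
proof -
  have "(h, g) \<in> grp_center (crossed_product H G \<alpha> f) \<longleftrightarrow>
        h \<in> fixed_pts H G \<alpha> \<and> g \<in> grp_center G \<and>
        (\<forall>h' \<in> carrier H. \<alpha> g h' = inv\<^bsub>H\<^esub> h \<otimes>\<^bsub>H\<^esub> h' \<otimes>\<^bsub>H\<^esub> h)" for h g
  proof -
    have "h \<in> fixed_pts H G \<alpha> \<Longrightarrow> h \<in> carrier H"
      unfolding fixed_pts_def by blast
    moreover have "g \<in> grp_center G \<Longrightarrow> g \<in> carrier G"
      unfolding grp_center_def by blast
    ultimately show ?thesis
      using crossed_product_center_iff[OF assms] twisted_commutation_iff[OF assms(1)] by blast
  qed
  then show ?thesis by auto
qed

end
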